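(* Let $\mathcal{C},\mathcal{D}$ be direct categories, $F:\mathcal{C}\to\mathcal{D}$ a functor, and $\mathcal{Q}\subseteq\mathcal{D}$ an interval. Then $F^{-1}(\mathcal{Q})$ is a subcategory of $\mathcal{C}$ each of whose connected components is an interval in $\mathcal{C}$, and $F^*(I_{\mathcal{Q}})=I_{\mathcal{Q}}\circ F$ is isomorphic to the direct sum of the interval modules $I_{\mathcal{P}}$ over the connected components $\mathcal{P}$ of $F^{-1}(\mathcal{Q})$.
   Context: A small category is direct if it has no infinite chain of composable non-identity morphisms and no cycle of non-identity morphisms of positive length. An interval in a direct category $\mathcal{C}$ is a nonempty connected subcategory $\mathcal{Q}$ that is convex: whenever $x,y\in\mathcal{Q}$, $\alpha:x\to z$, $\beta:z\to y$ are morphisms of $\mathcal{C}$ and $\beta\circ\alpha$ is a morphism of $\mathcal{Q}$, then $z$, $\alpha$, $\beta$ belong to $\mathcal{Q}$. The interval module $I_{\mathcal{Q}}$ (over a field $k$) takes value $k$ at objects of $\mathcal{Q}$ and $0$ elsewhere, sends morphisms of $\mathcal{Q}$ to the identity and all other morphisms to $0$. $F^{-1}(\mathcal{Q})$ is the subcategory of $\mathcal{C}$ whose objects are those $x$ with $F(x)\in\mathcal{Q}$ and whose morphisms are those $\varphi$ between such objects with $F(\varphi)$ a morphism of $\mathcal{Q}$. *)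

theory Defs
  imports Main
begin

text \<open>A small category: a set of objects, a set of morphisms, domain, codomain,
  identities and composition (Comp g f = g o f, defined when Cod f = Dom g).\<close>
record ('o, 'm) category =
  Obj  :: "'o set"
  Mor  :: "'m set"
  Dom  :: "'m \<Rightarrow> 'o"
  Cod  :: "'m \<Rightarrow> 'o"
  Id   :: "'o \<Rightarrow> 'm"
  Comp :: "'m \<Rightarrow> 'm \<Rightarrow> 'm"

definition is_category :: "('o, 'm) category \<Rightarrow> bool" where
  "is_category C \<longleftrightarrow>
     (\<forall>f\<in>Mor C. Dom C f \<in> Obj C \<and> Cod C f \<in> Obj C) \<and>
     (\<forall>x\<in>Obj C. Id C x \<in> Mor C \<and> Dom C (Id C x) = x \<and> Cod C (Id C x) = x) \<and>
     (\<forall>f\<in>Mor C. \<forall>g\<in>Mor C. Cod C f = Dom C g \<longrightarrow>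
        Comp C g f \<in> Mor C \<and> Dom C (Comp C g f) = Dom C f \<and> Cod C (Comp C g f) = Cod C g) \<and>
     (\<forall>f\<in>Mor C. Comp C (Id C (Cod C f)) f = f \<and> Comp C f (Id C (Dom C f)) = f) \<and>
     (\<forall>f\<in>Mor C. \<forall>g\<in>Mor C. \<forall>h\<in>Mor C. Cod C f = Dom C g \<longrightarrow> Cod C g = Dom C h \<longrightarrow>
        Comp C h (Comp C g f) = Comp C (Comp C h g) f)"

definition non_identity :: "('o, 'm) category \<Rightarrow> 'm \<Rightarrow> bool" where
  "non_identity C f \<longleftrightarrow> f \<in> Mor C \<and> f \<noteq> Id C (Dom C f)"

definition direct :: "('o, 'm) category \<Rightarrow> bool" where
  "direct C \<longleftrightarrow> is_category C \<and>
     \<not> (\<exists>c :: nat \<Rightarrow> 'm. \<forall>i. non_identity C (c i) \<and> Cod C (c (Suc i)) = Dom C (c i)) \<and>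
     \<not> (\<exists>n::nat. \<exists>c :: nat \<Rightarrow> 'm. n \<ge> 1 \<and>
           (\<forall>i<n. non_identity C (c i)) \<and>
           (\<forall>i. Suc i < n \<longrightarrow> Cod C (c i) = Dom C (c (Suc i))) \<and>
           Cod C (c (n - 1)) = Dom C (c 0))"

definition is_subcat :: "('o, 'm) category \<Rightarrow> 'o set \<times> 'm set \<Rightarrow> bool" where
  "is_subcat C S \<longleftrightarrow>
     fst S \<subseteq> Obj C \<and> snd S \<subseteq> Mor C \<and>
     (\<forall>f\<in>snd S. Dom C f \<in> fst S \<and> Cod C f \<in> fst S) \<and>
     (\<forall>x\<in>fst S. Id C x \<in> snd S) \<and>
     (\<forall>f\<in>snd S. \<forall>g\<in>snd S. Cod C f = Dom C g \<longrightarrow> Comp C g f \<in> snd S)"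

definition zigzag :: "('o, 'm) category \<Rightarrow> 'm set \<Rightarrow> ('o \<times> 'o) set" where
  "zigzag C M = (({(Dom C f, Cod C f) | f. f \<in> M}) \<union> ({(Dom C f, Cod C f) | f. f \<in> M})\<inverse>)\<^sup>*"

definition connected_subcat :: "('o, 'm) category \<Rightarrow> 'o set \<times> 'm set \<Rightarrow> bool" where
  "connected_subcat C S \<longleftrightarrow> fst S \<noteq> {} \<and>
     (\<forall>x\<in>fst S. \<forall>y\<in>fst S. (x, y) \<in> zigzag C (snd S))"

definition convex :: "('o, 'm) category \<Rightarrow> 'o set \<times> 'm set \<Rightarrow> bool" where
  "convex C S \<longleftrightarrow>
     (\<forall>\<alpha>\<in>Mor C. \<forall>\<beta>\<in>Mor C.
        Dom C \<alpha> \<in> fst S \<longrightarrow> Cod C \<beta> \<in> fst S \<longrightarrow> Cod C \<alpha> = Dom C \<beta> \<longrightarrow>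
        Comp C \<beta> \<alpha> \<in> snd S \<longrightarrow>
        Cod C \<alpha> \<in> fst S \<and> \<alpha> \<in> snd S \<and> \<beta> \<in> snd S)"

definition is_interval :: "('o, 'm) category \<Rightarrow> 'o set \<times> 'm set \<Rightarrow> bool" where
  "is_interval C S \<longleftrightarrow> is_subcat C S \<and> connected_subcat C S \<and> convex C S"

definition component_of :: "('o, 'm) category \<Rightarrow> 'o set \<times> 'm set \<Rightarrow> 'o \<Rightarrow> 'o set \<times> 'm set" where
  "component_of C S x =
     ({y \<in> fst S. (x, y) \<in> zigzag C (snd S)},
      {f \<in> snd S. Dom C f \<in> {y \<in> fst S. (x, y) \<in> zigzag C (snd S)}})"

definition components :: "('o, 'm) category \<Rightarrow> 'o set \<times> 'm set \<Rightarrow> ('o set \<times> 'm set) set" where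
  "components C S = component_of C S ` fst S"

definition is_functor :: "('o, 'm) category \<Rightarrow> ('p, 'n) category \<Rightarrow> ('o \<Rightarrow> 'p) \<Rightarrow> ('m \<Rightarrow> 'n) \<Rightarrow> bool" where
  "is_functor C D Fo Fm \<longleftrightarrow> is_category C \<and> is_category D \<and>
     (\<forall>x\<in>Obj C. Fo x \<in> Obj D) \<and>
     (\<forall>f\<in>Mor C. Fm f \<in> Mor D \<and> Dom D (Fm f) = Fo (Dom C f) \<and> Cod D (Fm f) = Fo (Cod C f)) \<and>
     (\<forall>x\<in>Obj C. Fm (Id C x) = Id D (Fo x)) \<and>
     (\<forall>f\<in>Mor C. \<forall>g\<in>Mor C. Cod C f = Dom C g \<longrightarrow> Fm (Comp C g f) = Comp D (Fm g) (Fm f))"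

definition preimage_subcat ::
  "('o, 'm) category \<Rightarrow> ('o \<Rightarrow> 'p) \<Rightarrow> ('m \<Rightarrow> 'n) \<Rightarrow> 'p set \<times> 'n set \<Rightarrow> 'o set \<times> 'm set" where
  "preimage_subcat C Fo Fm Q =
     ({x \<in> Obj C. Fo x \<in> fst Q},
      {f \<in> Mor C. Fo (Dom C f) \<in> fst Q \<and> Fo (Cod C f) \<in> fst Q \<and> Fm f \<in> snd Q})"

text \<open>A C-module over the field 'k: to each object x a linear subspace V x of the
  vector space 'i => 'k (pointwise operations), to each morphism f a map A f.\<close>
type_synonym ('o, 'm, 'i, 'k) cmodule = "('o \<Rightarrow> ('i \<Rightarrow> 'k) set) \<times> ('m \<Rightarrow> ('i \<Rightarrow> 'k) \<Rightarrow> ('i \<Rightarrow> 'k))"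

definition lin_subspace :: "('i \<Rightarrow> 'k::field) set \<Rightarrow> bool" where
  "lin_subspace V \<longleftrightarrow> (\<lambda>_. 0) \<in> V \<and>
     (\<forall>u\<in>V. \<forall>v\<in>V. (\<lambda>i. u i + v i) \<in> V) \<and> (\<forall>c. \<forall>u\<in>V. (\<lambda>i. c * u i) \<in> V)"

definition lin_on :: "('i \<Rightarrow> 'k::field) set \<Rightarrow> (('i \<Rightarrow> 'k) \<Rightarrow> ('j \<Rightarrow> 'k)) \<Rightarrow> bool" where
  "lin_on V h \<longleftrightarrow>
     (\<forall>u\<in>V. \<forall>v\<in>V. h (\<lambda>i. u i + v i) = (\<lambda>j. h u j + h v j)) \<and>
     (\<forall>c. \<forall>u\<in>V. h (\<lambda>i. c * u i) = (\<lambda>j. c * h u j))"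

definition is_cmodule :: "('o, 'm) category \<Rightarrow> ('o, 'm, 'i, 'k::field) cmodule \<Rightarrow> bool" where
  "is_cmodule C M \<longleftrightarrow>
     (\<forall>x\<in>Obj C. lin_subspace (fst M x)) \<and>
     (\<forall>f\<in>Mor C. (\<forall>v\<in>fst M (Dom C f). snd M f v \<in> fst M (Cod C f)) \<and> lin_on (fst M (Dom C f)) (snd M f)) \<and>
     (\<forall>x\<in>Obj C. \<forall>v\<in>fst M x. snd M (Id C x) v = v) \<and>
     (\<forall>f\<in>Mor C. \<forall>g\<in>Mor C. Cod C f = Dom C g \<longrightarrow>
        (\<forall>v\<in>fst M (Dom C f). snd M (Comp C g f) v = snd M g (snd M f v)))"

definition cmod_iso :: "('o, 'm) category \<Rightarrow> ('o, 'm, 'i, 'k::field) cmodule \<Rightarrow> ('o, 'm, 'j, 'k) cmodule \<Rightarrow> bool" where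
  "cmod_iso C M N \<longleftrightarrow> (\<exists>\<phi> :: 'o \<Rightarrow> ('i \<Rightarrow> 'k) \<Rightarrow> ('j \<Rightarrow> 'k).
     (\<forall>x\<in>Obj C. bij_betw (\<phi> x) (fst M x) (fst N x) \<and> lin_on (fst M x) (\<phi> x)) \<and>
     (\<forall>f\<in>Mor C. \<forall>v\<in>fst M (Dom C f). \<phi> (Cod C f) (snd M f v) = snd N f (\<phi> (Dom C f) v)))"

text \<open>Interval module I_S: k (= unit => k) on objects of S, 0 elsewhere; identity on
  morphisms of S, zero on all other morphisms.\<close>
definition interval_module :: "'o set \<times> 'm set \<Rightarrow> ('o, 'm, unit, 'k::field) cmodule" where
  "interval_module S =
     (\<lambda>x. if x \<in> fst S then UNIV else {\<lambda>_. 0},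
      \<lambda>f v. if f \<in> snd S then v else (\<lambda>_. 0))"

definition pullback_module :: "('o \<Rightarrow> 'p) \<Rightarrow> ('m \<Rightarrow> 'n) \<Rightarrow> ('p, 'n, 'i, 'k) cmodule \<Rightarrow> ('o, 'm, 'i, 'k) cmodule" where
  "pullback_module Fo Fm M = (\<lambda>x. fst M (Fo x), \<lambda>f. snd M (Fm f))"

definition direct_sum_module ::
  "'s set \<Rightarrow> ('s \<Rightarrow> ('o, 'm, 'i, 'k::field) cmodule) \<Rightarrow> ('o, 'm, 's \<times> 'i, 'k) cmodule" where
  "direct_sum_module S M =
     (\<lambda>x. {v. finite {s. \<exists>i. v (s, i) \<noteq> 0} \<and>
              (\<forall>s. s \<notin> S \<longrightarrow> (\<forall>i. v (s, i) = 0)) \<and>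
              (\<forall>s\<in>S. (\<lambda>i. v (s, i)) \<in> fst (M s) x)},
      \<lambda>f v. (\<lambda>(s, i). if s \<in> S then snd (M s) f (\<lambda>i'. v (s, i')) i else 0))"

end

theory Submission
  imports Defs
begin

text \<open>The preimage of a subcategory Q under a functor is a subcategory, and it is convex as soon
  as Q is, because a factorisation of a morphism in the preimage maps to a factorisation of a
  morphism of Q. A connected component of a convex subcategory is again convex, since the middle
  object of such a factorisation is joined to the source by a morphism of the subcategory; hence
  the components of the preimage are intervals. Finally, on C the module I_Q o F coincides with the
  interval-type module of the whole preimage, and such a module splits as the direct sum over the
  components because every morphism of the preimage stays inside a single component.\<close>

lemma category_Dom_Cod:
  "is_category C \<Longrightarrow> f \<in> Mor C \<Longrightarrow> Dom C f \<in> Obj C \<and> Cod C f \<in> Obj C"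
  unfolding is_category_def by blast

lemma category_Id:
  "is_category C \<Longrightarrow> x \<in> Obj C \<Longrightarrow> Id C x \<in> Mor C \<and> Dom C (Id C x) = x \<and> Cod C (Id C x) = x"
  unfolding is_category_def by blast

lemma category_Comp:
  "is_category C \<Longrightarrow> f \<in> Mor C \<Longrightarrow> g \<in> Mor C \<Longrightarrow> Cod C f = Dom C g \<Longrightarrow>
    Comp C g f \<in> Mor C \<and> Dom C (Comp C g f) = Dom C f \<and> Cod C (Comp C g f) = Cod C g"
  unfolding is_category_def by blast

lemma functor_is_category: "is_functor C D Fo Fm \<Longrightarrow> is_category C"
  by (simp add: is_functor_def)

lemma functor_Mor:
  "is_functor C D Fo Fm \<Longrightarrow> f \<in> Mor C \<Longrightarrow>
    Fm f \<in> Mor D \<and> Dom D (Fm f) = Fo (Dom C f) \<and> Cod D (Fm f) = Fo (Cod C f)"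
  unfolding is_functor_def by blast

lemma functor_Id: "is_functor C D Fo Fm \<Longrightarrow> x \<in> Obj C \<Longrightarrow> Fm (Id C x) = Id D (Fo x)"
  unfolding is_functor_def by blast

lemma functor_Comp:
  "is_functor C D Fo Fm \<Longrightarrow> f \<in> Mor C \<Longrightarrow> g \<in> Mor C \<Longrightarrow> Cod C f = Dom C g \<Longrightarrow>
    Fm (Comp C g f) = Comp D (Fm g) (Fm f)"
  unfolding is_functor_def by blast

lemma zigzag_refl: "(x, x) \<in> zigzag C M"
  unfolding zigzag_def by simp

lemma zigzag_sym: "(x, y) \<in> zigzag C M \<Longrightarrow> (y, x) \<in> zigzag C M"
  unfolding zigzag_def by (meson sym_Un_converse sym_rtrancl symD)

lemma zigzag_trans: "(x, y) \<in> zigzag C M \<Longrightarrow> (y, z) \<in> zigzag C M \<Longrightarrow> (x, z) \<in> zigzag C M"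
  unfolding zigzag_def by (rule rtrancl_trans)

lemma zigzag_Dom_Cod: "f \<in> M \<Longrightarrow> (Dom C f, Cod C f) \<in> zigzag C M"
  unfolding zigzag_def by blast

lemma zigzag_Cod_Dom: "f \<in> M \<Longrightarrow> (Cod C f, Dom C f) \<in> zigzag C M"
  unfolding zigzag_def by blast

lemma zigzag_step_cases:
  assumes "(y, z) \<in> {(Dom C f, Cod C f) |f. f \<in> M} \<union> {(Dom C f, Cod C f) |f. f \<in> M}\<inverse>"
  obtains f where "f \<in> M" "y = Dom C f" "z = Cod C f" | f where "f \<in> M" "z = Dom C f" "y = Cod C f"
  using assms by blast

lemma zigzag_subcat_closed:
  assumes S: "is_subcat C S" and x: "x \<in> fst S" and xy: "(x, y) \<in> zigzag C (snd S)"
  shows "y \<in> fst S"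
  using xy[unfolded zigzag_def] x
proof (induction rule: rtrancl_induct)
  case (step y z)
  then show ?case using S unfolding is_subcat_def by auto
qed

lemma component_of_self: "x \<in> fst S \<Longrightarrow> x \<in> fst (component_of C S x)"
  unfolding component_of_def by (simp add: zigzag_refl)

lemma component_of_eq:
  assumes "y \<in> fst (component_of C S x)"
  shows "component_of C S y = component_of C S x"
proof -
  have "(x, y) \<in> zigzag C (snd S)" using assms unfolding component_of_def by auto
  then have "(y, z) \<in> zigzag C (snd S) \<longleftrightarrow> (x, z) \<in> zigzag C (snd S)" for z
    using zigzag_sym zigzag_trans by metis
  then show ?thesis unfolding component_of_def by simp
qed

lemma component_of_in_components: "x \<in> fst S \<Longrightarrow> component_of C S x \<in> components C S"
  unfolding components_def by blast

lemma components_subset: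
  "P \<in> components C S \<Longrightarrow> fst P \<subseteq> fst S \<and> snd P \<subseteq> snd S"
  unfolding components_def component_of_def by auto

lemma components_eq_component_of:
  "P \<in> components C S \<Longrightarrow> x \<in> fst P \<Longrightarrow> P = component_of C S x"
  unfolding components_def using component_of_eq by fastforce

lemma is_subcat_component_of:
  assumes C: "is_category C" and S: "is_subcat C S" and x: "x \<in> fst S"
  shows "is_subcat C (component_of C S x)"
proof -
  let ?K = "{y \<in> fst S. (x, y) \<in> zigzag C (snd S)}"
  have obj: "fst S \<subseteq> Obj C" and mor: "snd S \<subseteq> Mor C"
    and ident: "\<forall>y\<in>fst S. Id C y \<in> snd S"
    and comp: "\<forall>f\<in>snd S. \<forall>g\<in>snd S. Cod C f = Dom C g \<longrightarrow> Comp C g f \<in> snd S"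
    and dom_cod: "\<forall>f\<in>snd S. Dom C f \<in> fst S \<and> Cod C f \<in> fst S"
    using S unfolding is_subcat_def by blast+
  have "Cod C f \<in> ?K" if "f \<in> snd S" "Dom C f \<in> ?K" for f
    using that dom_cod zigzag_trans[OF _ zigzag_Dom_Cod[OF that(1)]] by simp
  moreover have "Dom C (Id C y) = y" if "y \<in> fst S" for y
    using that obj category_Id[OF C] by blast
  moreover have "Dom C (Comp C g f) = Dom C f"
    if "f \<in> snd S" "g \<in> snd S" "Cod C f = Dom C g" for f g
    using that mor category_Comp[OF C] by blast
  ultimately show ?thesis
    using obj mor ident comp unfolding is_subcat_def component_of_def fst_conv snd_conv
    by (intro conjI ballI impI) auto
qed

lemma connected_component_of:
  assumes S: "is_subcat C S" and x: "x \<in> fst S"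
  shows "connected_subcat C (component_of C S x)"
proof -
  let ?K = "{y \<in> fst S. (x, y) \<in> zigzag C (snd S)}"
  let ?P = "{f \<in> snd S. Dom C f \<in> ?K}"
  \<comment> \<open>Every step of a zigzag from x in S has an endpoint, hence both, in the component.\<close>
  have zigzag_within: "(x, y) \<in> zigzag C ?P" if "(x, y) \<in> zigzag C (snd S)" for y
    using that[unfolded zigzag_def]
  proof (induction rule: rtrancl_induct)
    case base
    then show ?case by (rule zigzag_refl)
  next
    case (step y z)
    have xy: "(x, y) \<in> zigzag C (snd S)" and xz: "(x, z) \<in> zigzag C (snd S)"
      using step(1) rtrancl_into_rtrancl[OF step(1,2)] unfolding zigzag_def by auto
    have "y \<in> fst S" "z \<in> fst S"
      using zigzag_subcat_closed[OF S x] xy xz by auto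
    with xy xz have "(y, z) \<in> zigzag C ?P"
      by (cases rule: zigzag_step_cases[OF step(2)]) (auto intro: zigzag_Dom_Cod zigzag_Cod_Dom)
    with step(3) show ?case by (rule zigzag_trans)
  qed
  have connected: "\<forall>y\<in>?K. \<forall>z\<in>?K. (y, z) \<in> zigzag C ?P"
  proof (intro ballI)
    fix y z assume "y \<in> ?K" "z \<in> ?K"
    then have "(x, y) \<in> zigzag C ?P" "(x, z) \<in> zigzag C ?P"
      by (blast intro: zigzag_within)+
    then show "(y, z) \<in> zigzag C ?P" by (rule zigzag_trans[OF zigzag_sym])
  qed
  have "x \<in> ?K" using x by (simp add: zigzag_refl)
  then have "?K \<noteq> {}" by blast
  from this connected show ?thesis
    unfolding connected_subcat_def component_of_def fst_conv snd_conv by (rule conjI)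
qed

lemma convex_component_of:
  assumes "convex C S"
  shows "convex C (component_of C S x)"
  unfolding convex_def
proof (intro ballI impI)
  fix \<alpha> \<beta>
  assume \<alpha>: "\<alpha> \<in> Mor C" and \<beta>: "\<beta> \<in> Mor C" and \<alpha>\<beta>: "Cod C \<alpha> = Dom C \<beta>"
    and dom: "Dom C \<alpha> \<in> fst (component_of C S x)"
    and cod: "Cod C \<beta> \<in> fst (component_of C S x)"
    and comp: "Comp C \<beta> \<alpha> \<in> snd (component_of C S x)"
  have x\<alpha>: "(x, Dom C \<alpha>) \<in> zigzag C (snd S)"
    using dom unfolding component_of_def by simp
  have dom_S: "Dom C \<alpha> \<in> fst S" and "Cod C \<beta> \<in> fst S" "Comp C \<beta> \<alpha> \<in> snd S"
    using dom cod comp unfolding component_of_def by simp_all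
  then have S: "Cod C \<alpha> \<in> fst S" "\<alpha> \<in> snd S" "\<beta> \<in> snd S"
    using assms[unfolded convex_def, rule_format, OF \<alpha> \<beta>] \<alpha>\<beta> by simp_all
  have "(x, Cod C \<alpha>) \<in> zigzag C (snd S)"
    using zigzag_trans[OF x\<alpha> zigzag_Dom_Cod[OF S(2)]] .
  then show "Cod C \<alpha> \<in> fst (component_of C S x) \<and> \<alpha> \<in> snd (component_of C S x)
      \<and> \<beta> \<in> snd (component_of C S x)"
    using S dom_S x\<alpha> \<alpha>\<beta> unfolding component_of_def by simp
qed

lemma is_interval_components:
  assumes "is_category C" "is_subcat C S" "convex C S" "P \<in> components C S"
  shows "is_interval C P"
proof -
  obtain x where x: "x \<in> fst S" and P: "P = component_of C S x"
    using assms(4) unfolding components_def by blast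
  show ?thesis
    unfolding is_interval_def P
    using is_subcat_component_of[OF assms(1,2) x] connected_component_of[OF assms(2) x]
      convex_component_of[OF assms(3)] by blast
qed

lemma is_subcat_preimage_subcat:
  assumes F: "is_functor C D Fo Fm" and Q: "is_subcat D Q"
  shows "is_subcat C (preimage_subcat C Fo Fm Q)"
proof -
  have C: "is_category C" using F by (rule functor_is_category)
  have Q_Id: "\<forall>y\<in>fst Q. Id D y \<in> snd Q"
    and Q_Comp: "\<forall>f\<in>snd Q. \<forall>g\<in>snd Q. Cod D f = Dom D g \<longrightarrow> Comp D g f \<in> snd Q"
    using Q unfolding is_subcat_def by blast+
  have "Fm (Id C x) \<in> snd Q" if "x \<in> Obj C" "Fo x \<in> fst Q" for x
    using that Q_Id functor_Id[OF F] by simp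
  moreover have "Fm (Comp C g f) \<in> snd Q"
    if "f \<in> Mor C" "g \<in> Mor C" "Cod C f = Dom C g" "Fm f \<in> snd Q" "Fm g \<in> snd Q" for f g
    using that Q_Comp functor_Comp[OF F] functor_Mor[OF F] by simp
  ultimately show ?thesis
    using category_Dom_Cod[OF C] category_Id[OF C] category_Comp[OF C]
    unfolding is_subcat_def preimage_subcat_def fst_conv snd_conv
    by (intro conjI ballI impI) auto
qed

lemma convex_preimage_subcat:
  assumes F: "is_functor C D Fo Fm" and Q: "convex D Q"
  shows "convex C (preimage_subcat C Fo Fm Q)"
  unfolding convex_def
proof (intro ballI impI)
  fix \<alpha> \<beta>
  assume \<alpha>: "\<alpha> \<in> Mor C" and \<beta>: "\<beta> \<in> Mor C" and \<alpha>\<beta>: "Cod C \<alpha> = Dom C \<beta>"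
    and "Dom C \<alpha> \<in> fst (preimage_subcat C Fo Fm Q)"
    and "Cod C \<beta> \<in> fst (preimage_subcat C Fo Fm Q)"
    and "Comp C \<beta> \<alpha> \<in> snd (preimage_subcat C Fo Fm Q)"
  then have dom: "Fo (Dom C \<alpha>) \<in> fst Q" and cod: "Fo (Cod C \<beta>) \<in> fst Q"
    and comp: "Fm (Comp C \<beta> \<alpha>) \<in> snd Q"
    unfolding preimage_subcat_def by simp_all
  have Fcomp: "Fm (Comp C \<beta> \<alpha>) = Comp D (Fm \<beta>) (Fm \<alpha>)"
    using functor_Comp[OF F \<alpha> \<beta> \<alpha>\<beta>] .
  have F\<alpha>: "Fm \<alpha> \<in> Mor D" "Dom D (Fm \<alpha>) = Fo (Dom C \<alpha>)" "Cod D (Fm \<alpha>) = Fo (Cod C \<alpha>)"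
    and F\<beta>: "Fm \<beta> \<in> Mor D" "Dom D (Fm \<beta>) = Fo (Dom C \<beta>)" "Cod D (Fm \<beta>) = Fo (Cod C \<beta>)"
    using functor_Mor[OF F \<alpha>] functor_Mor[OF F \<beta>] by simp_all
  have "Cod D (Fm \<alpha>) \<in> fst Q \<and> Fm \<alpha> \<in> snd Q \<and> Fm \<beta> \<in> snd Q"
  proof (rule Q[unfolded convex_def, rule_format, OF F\<alpha>(1) F\<beta>(1)])
    show "Dom D (Fm \<alpha>) \<in> fst Q" "Cod D (Fm \<beta>) \<in> fst Q" "Cod D (Fm \<alpha>) = Dom D (Fm \<beta>)"
      using F\<alpha> F\<beta> \<alpha>\<beta> dom cod by simp_all
    show "Comp D (Fm \<beta>) (Fm \<alpha>) \<in> snd Q" using comp Fcomp by simp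
  qed
  moreover have "Cod C \<alpha> \<in> Obj C"
    using category_Dom_Cod[OF functor_is_category[OF F] \<alpha>] by simp
  ultimately show "Cod C \<alpha> \<in> fst (preimage_subcat C Fo Fm Q) \<and> \<alpha> \<in> snd (preimage_subcat C Fo Fm Q)
      \<and> \<beta> \<in> snd (preimage_subcat C Fo Fm Q)"
    using \<alpha> \<beta> \<alpha>\<beta> dom cod F\<alpha> unfolding preimage_subcat_def by simp
qed

lemma direct_sum_interval_components_fiber:
  "fst (direct_sum_module (components C S) (\<lambda>P. interval_module P :: ('o, 'm, unit, 'k::field) cmodule)) x
    = {v. \<forall>P i. v (P, i) \<noteq> 0 \<longrightarrow> x \<in> fst S \<and> P = component_of C S x}"
  (is "?N = ?V")
proof
  show "?N \<subseteq> ?V"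
  proof
    fix v assume v: "v \<in> ?N"
    show "v \<in> ?V"
    proof (intro CollectI allI impI)
      fix P i assume nz: "v (P, i) \<noteq> 0"
      with v have P: "P \<in> components C S"
        unfolding direct_sum_module_def fst_conv mem_Collect_eq by blast
      with v have "(\<lambda>i. v (P, i)) \<in> fst (interval_module P :: ('o, 'm, unit, 'k) cmodule) x"
        unfolding direct_sum_module_def fst_conv mem_Collect_eq by blast
      with nz have "x \<in> fst P"
        unfolding interval_module_def by (auto split: if_splits dest: fun_cong[where x = i])
      then show "x \<in> fst S \<and> P = component_of C S x"
        using components_subset[OF P] components_eq_component_of[OF P] by auto
    qed
  qed
next
  show "?V \<subseteq> ?N"
  proof (rule subsetI)
    fix v assume v: "v \<in> ?V"
    then have "{P. \<exists>i. v (P, i) \<noteq> 0} \<subseteq> {component_of C S x}"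
      by blast
    then have "finite {P. \<exists>i. v (P, i) \<noteq> 0}"
      by (rule finite_subset) simp
    moreover have "\<forall>P. P \<notin> components C S \<longrightarrow> (\<forall>i. v (P, i) = 0)"
      using v component_of_in_components[of x S C] by blast
    moreover have "(\<lambda>i. v (P, i)) \<in> fst (interval_module P :: ('o, 'm, unit, 'k) cmodule) x" for P
    proof (cases "x \<in> fst P")
      case False
      then have "v (P, i) = 0" for i
        using v component_of_self[of x S C] False by blast
      with False show ?thesis unfolding interval_module_def by auto
    qed (simp add: interval_module_def)
    ultimately show "v \<in> ?N"
      unfolding direct_sum_module_def by simp
  qed
qed

lemma interval_module_iso_direct_sum_components:
  assumes S: "is_subcat C S"
  shows "cmod_iso C (interval_module S :: ('o, 'm, unit, 'k::field) cmodule)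
           (direct_sum_module (components C S) (\<lambda>P. interval_module P :: ('o, 'm, unit, 'k) cmodule))"
    (is "cmod_iso C ?M ?N")
proof -
  define \<phi> :: "'o \<Rightarrow> (unit \<Rightarrow> 'k) \<Rightarrow> ('o set \<times> 'm set) \<times> unit \<Rightarrow> 'k" where
    "\<phi> x u = (\<lambda>(P, i). if x \<in> fst S \<and> P = component_of C S x then u () else 0)" for x u
  have bij: "bij_betw (\<phi> x) (fst ?M x) (fst ?N x)" for x
  proof (rule bij_betw_byWitness[where f' = "\<lambda>v _. v (component_of C S x, ())"])
    show "\<forall>u\<in>fst ?M x. (\<lambda>_. \<phi> x u (component_of C S x, ())) = u"
      unfolding \<phi>_def interval_module_def by auto
    show "\<forall>v\<in>fst ?N x. \<phi> x (\<lambda>_. v (component_of C S x, ())) = v"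
      unfolding \<phi>_def direct_sum_interval_components_fiber by (force split: prod.splits)
    show "\<phi> x ` fst ?M x \<subseteq> fst ?N x"
      unfolding \<phi>_def direct_sum_interval_components_fiber by (auto split: if_splits)
    show "(\<lambda>v _. v (component_of C S x, ())) ` fst ?N x \<subseteq> fst ?M x"
      unfolding direct_sum_interval_components_fiber
      by (auto simp: interval_module_def simp del: split_paired_All)
  qed
  have lin: "lin_on (fst ?M x) (\<phi> x)" for x
    unfolding lin_on_def \<phi>_def by (auto intro!: ext split: prod.splits)
  have nat: "\<phi> (Cod C f) (snd ?M f v) = snd ?N f (\<phi> (Dom C f) v)" for f v
  proof (cases "f \<in> snd S")
    case True
    then have dom: "Dom C f \<in> fst S" and cod: "Cod C f \<in> fst S"
      using S unfolding is_subcat_def by blast+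
    have "component_of C S (Cod C f) = component_of C S (Dom C f)"
      by (rule component_of_eq) (simp add: component_of_def cod zigzag_Dom_Cod[OF True])
    moreover have "f \<in> snd (component_of C S (Dom C f))"
      using True dom by (simp add: component_of_def zigzag_refl)
    moreover have "component_of C S (Dom C f) \<in> components C S"
      using dom by (rule component_of_in_components)
    ultimately show ?thesis
      using True dom cod unfolding \<phi>_def direct_sum_module_def interval_module_def
      by (auto intro!: ext split: prod.splits) (metis snd_conv)
  next
    case False
    then have "f \<notin> snd P" if "P \<in> components C S" for P
      using components_subset[OF that] by blast
    with False show ?thesis
      unfolding \<phi>_def direct_sum_module_def interval_module_def
      by (auto intro!: ext split: prod.splits)
  qed
  show ?thesis
    unfolding cmod_iso_def using bij lin nat by blast
qed

lemma cmod_iso_cong_left: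
  assumes C: "is_category C"
    and obj: "\<And>x. x \<in> Obj C \<Longrightarrow> fst M' x = fst M x"
    and mor: "\<And>f. f \<in> Mor C \<Longrightarrow> snd M' f = snd M f"
    and iso: "cmod_iso C M N"
  shows "cmod_iso C M' N"
proof -
  obtain \<phi> where
    "\<forall>x\<in>Obj C. bij_betw (\<phi> x) (fst M x) (fst N x) \<and> lin_on (fst M x) (\<phi> x)"
    "\<forall>f\<in>Mor C. \<forall>v\<in>fst M (Dom C f). \<phi> (Cod C f) (snd M f v) = snd N f (\<phi> (Dom C f) v)"
    using iso unfolding cmod_iso_def by blast
  with obj mor category_Dom_Cod[OF C] show ?thesis
    unfolding cmod_iso_def by (intro exI[of _ \<phi>]) auto
qed

lemma fst_pullback_interval_module:
  "x \<in> Obj C \<Longrightarrow> fst (pullback_module Fo Fm (interval_module Q :: ('p, 'n, unit, 'k::field) cmodule)) x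
     = fst (interval_module (preimage_subcat C Fo Fm Q) :: ('o, 'm, unit, 'k) cmodule) x"
  unfolding pullback_module_def interval_module_def preimage_subcat_def by simp

lemma snd_pullback_interval_module:
  assumes F: "is_functor C D Fo Fm" and Q: "is_subcat D Q" and f: "f \<in> Mor C"
  shows "snd (pullback_module Fo Fm (interval_module Q :: ('p, 'n, unit, 'k::field) cmodule)) f
           = snd (interval_module (preimage_subcat C Fo Fm Q) :: ('o, 'm, unit, 'k) cmodule) f"
proof -
  have "Fm f \<in> snd Q \<Longrightarrow> Fo (Dom C f) \<in> fst Q \<and> Fo (Cod C f) \<in> fst Q"
    using Q functor_Mor[OF F f] unfolding is_subcat_def by metis
  with f show ?thesis
    unfolding pullback_module_def interval_module_def preimage_subcat_def by auto
qed

theorem lemma2p9: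
  fixes C :: "('o, 'm) category" and D :: "('p, 'n) category"
    and Fo :: "'o \<Rightarrow> 'p" and Fm :: "'m \<Rightarrow> 'n"
    and Q :: "'p set \<times> 'n set"
  assumes "direct C" and "direct D"
    and "is_functor C D Fo Fm"
    and "is_interval D Q"
  shows "is_subcat C (preimage_subcat C Fo Fm Q) \<and>
         (\<forall>P\<in>components C (preimage_subcat C Fo Fm Q). is_interval C P) \<and>
         cmod_iso C
           (pullback_module Fo Fm (interval_module Q :: ('p, 'n, unit, 'k::field) cmodule))
           (direct_sum_module (components C (preimage_subcat C Fo Fm Q))
              (\<lambda>P. interval_module P :: ('o, 'm, unit, 'k) cmodule))"
proof -
  note F = \<open>is_functor C D Fo Fm\<close>
  have C: "is_category C" using F by (rule functor_is_category)
  have Q_subcat: "is_subcat D Q" and Q_convex: "convex D Q"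
    using \<open>is_interval D Q\<close> unfolding is_interval_def by blast+
  let ?S = "preimage_subcat C Fo Fm Q"
  have S_subcat: "is_subcat C ?S" using F Q_subcat by (rule is_subcat_preimage_subcat)
  moreover have "\<forall>P\<in>components C ?S. is_interval C P"
    using is_interval_components[OF C S_subcat convex_preimage_subcat[OF F Q_convex]] by blast
  moreover have "cmod_iso C
      (pullback_module Fo Fm (interval_module Q :: ('p, 'n, unit, 'k::field) cmodule))
      (direct_sum_module (components C ?S) (\<lambda>P. interval_module P :: ('o, 'm, unit, 'k) cmodule))"
    using C fst_pullback_interval_module snd_pullback_interval_module[OF F Q_subcat]
      interval_module_iso_direct_sum_components[OF S_subcat]
    by (rule cmod_iso_cong_left)
  ultimately show ?thesis by blast
qed

end
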